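(* Let $B=\begin{pmatrix}1&0&0\\0&0&-1\\0&1&0\end{pmatrix}$ and let $\mathcal{L}:M_3\to M_3$ be $\mathcal{L}(X)=\tfrac12B(\mathrm{tr}(X)I_3-X^{T})B^*-X$. Then $\{e^{t\mathcal{L}}\}_{t\ge0}$ is a quantum dynamical semigroup of unital quantum channels, and, letting $t_0>0$ be the smallest positive zero of $f(t)=e^{t}-e^{-t/2}-3\sinh(t/2)-2\sin(t/2)$ (numerically $t_0\approx1.4034$), the channel $e^{t\mathcal{L}}$ is not mixed unitary for every $t\in(0,t_0)$.
   Context: $X^T$ is the transpose. A quantum dynamical semigroup of unital quantum channels is a family $\{\Phi_t\}_{t\ge0}$ of completely positive, unital, trace-preserving maps with $\Phi_0=\mathrm{id}$, $\Phi_s\Phi_t=\Phi_{s+t}$, continuous in $t$. A channel is mixed unitary if it equals $\sum_j\lambda_j\mathrm{Ad}_{U_j}$ with unitaries $U_j$, $\lambda_j\ge0$, $\sum_j\lambda_j=1$, where $\mathrm{Ad}_U(X)=U^*XU$. *)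

theory Defs
  imports "HOL-Analysis.Analysis"
begin

type_synonym M3 = "complex^3^3"

definition adj :: "complex^'n^'n \<Rightarrow> complex^'n^'n" where
  "adj X = (\<chi> i j. cnj (X $ j $ i))"

definition unitary_mat :: "complex^'n^'n \<Rightarrow> bool" where
  "unitary_mat U \<longleftrightarrow> adj U ** U = mat 1 \<and> U ** adj U = mat 1"

definition Ad :: "complex^'n^'n \<Rightarrow> complex^'n^'n \<Rightarrow> complex^'n^'n" where
  "Ad U X = adj U ** X ** U"

(* positive semidefiniteness of a k x k block matrix with 3x3 blocks X i j
   (i, j < k), i.e. of an element of M_k(M_3) *)
definition psd_block :: "nat \<Rightarrow> (nat \<Rightarrow> nat \<Rightarrow> M3) \<Rightarrow> bool" where
  "psd_block k X \<longleftrightarrow> (\<forall>v :: nat \<Rightarrow> complex^3.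
     let q = (\<Sum>i<k. \<Sum>j<k. (\<Sum>a\<in>UNIV. cnj (v i $ a) * ((X i j *v v j) $ a)))
     in Im q = 0 \<and> Re q \<ge> 0)"

definition linear_map :: "(M3 \<Rightarrow> M3) \<Rightarrow> bool" where
  "linear_map \<Phi> \<longleftrightarrow> (\<forall>X Y. \<Phi> (X + Y) = \<Phi> X + \<Phi> Y) \<and>
     (\<forall>c X. \<Phi> (\<chi> i j. c * X $ i $ j) = (\<chi> i j. c * \<Phi> X $ i $ j))"

(* complete positivity: id_k \<otimes> \<Phi> is positive for every k *)
definition completely_positive :: "(M3 \<Rightarrow> M3) \<Rightarrow> bool" where
  "completely_positive \<Phi> \<longleftrightarrow>
     (\<forall>k X. psd_block k X \<longrightarrow> psd_block k (\<lambda>i j. \<Phi> (X i j)))"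

definition unital_channel :: "(M3 \<Rightarrow> M3) \<Rightarrow> bool" where
  "unital_channel \<Phi> \<longleftrightarrow> linear_map \<Phi> \<and> completely_positive \<Phi> \<and>
     \<Phi> (mat 1) = mat 1 \<and> (\<forall>X. trace (\<Phi> X) = trace X)"

definition qds_unital :: "(real \<Rightarrow> M3 \<Rightarrow> M3) \<Rightarrow> bool" where
  "qds_unital \<Phi> \<longleftrightarrow> (\<forall>t\<ge>0. unital_channel (\<Phi> t)) \<and> \<Phi> 0 = id \<and>
     (\<forall>s\<ge>0. \<forall>t\<ge>0. \<Phi> s \<circ> \<Phi> t = \<Phi> (s + t)) \<and>
     (\<forall>X. continuous_on {0..} (\<lambda>t. \<Phi> t X))"

definition mixed_unitary :: "(M3 \<Rightarrow> M3) \<Rightarrow> bool" where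
  "mixed_unitary \<Phi> \<longleftrightarrow> (\<exists>(n::nat) (lam :: nat \<Rightarrow> real) (U :: nat \<Rightarrow> M3).
     (\<forall>j<n. lam j \<ge> 0 \<and> unitary_mat (U j)) \<and> (\<Sum>j<n. lam j) = 1 \<and>
     (\<forall>X. \<Phi> X = (\<Sum>j<n. lam j *\<^sub>R Ad (U j) X)))"

definition sup_exp :: "real \<Rightarrow> (M3 \<Rightarrow> M3) \<Rightarrow> M3 \<Rightarrow> M3" where
  "sup_exp t L X = (\<Sum>n. (t ^ n / fact n) *\<^sub>R ((L ^^ n) X))"

(* indices of type 3 are 0,1,2 *)
definition Bmat :: M3 where
  "Bmat = (\<chi> i j. if i = 0 \<and> j = 0 then 1
                  else if i = 1 \<and> j = 2 then -1
                  else if i = 2 \<and> j = 1 then 1 else 0)"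

definition Lgen :: "M3 \<Rightarrow> M3" where
  "Lgen X = (1/2) *\<^sub>R (Bmat ** (mat (trace X) - transpose X) ** adj Bmat) - X"

definition ff :: "real \<Rightarrow> real" where
  "ff t = exp t - exp (- t / 2) - 3 * sinh (t / 2) - 2 * sin (t / 2)"

end

theory Submission
  imports Defs
begin

(*
  Write S X = B X^T B^* and T X = tr(X) I, so that L = T/2 - S/2 - id. Since S^4 = id,
  S T = T S = T and T^2 = 3 T, the real span of id, S, S^2, S^3 and T is a commutative algebra,
  on which L has the eigenvalues 0, -3/2, -1/2 and -1 +- i/2. Hence e^(tL) has explicit
  coefficients in this basis. The semigroup law, unitality and trace preservation are read off
  from them, and for t >= 0 they exhibit e^(tL) as a non-negative combination of conjugations,
  hence as a completely positive map.

  Mixed unitarity is excluded by a linear functional on superoperators that is non-negative on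
  every conjugation Ad U by a unitary U, because Re tr((UB)^* (UB)^T) >= -1 for every unitary
  3 x 3 matrix (the antisymmetric part of a 3 x 3 matrix has a kernel vector), but that takes
  the value e^(-t) f(t) < 0 on e^(tL) for 0 < t < t0.
*)

lemma num3_eq_0: "(3::3) = 0"
  by simp

lemma num3_cases: "(i::3) = 0 \<or> i = 1 \<or> i = 2"
  using exhaust_3[of i, unfolded num3_eq_0] by blast

lemma sum_UNIV_3: "sum f (UNIV::3 set) = f 0 + f 1 + f 2"
  using sum_3[of f, unfolded num3_eq_0] by (simp add: add_ac)

lemma mat3_eqI:
  assumes "\<And>i j. i \<in> {0,1,2} \<Longrightarrow> j \<in> {0,1,2} \<Longrightarrow> (X::'a^3^3) $ i $ j = Y $ i $ j"
  shows "X = Y"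
  using assms num3_cases by (auto simp: vec_eq_iff)

lemma scaleR_matrix_nth: "(r *\<^sub>R (X::complex^'n^'m)) $ i $ j = of_real r * X $ i $ j"
  unfolding vector_scaleR_component by (simp add: scaleR_conv_of_real)

lemma trace_scaleR: "trace (r *\<^sub>R (X::complex^'n^'n)) = of_real r * trace X"
  unfolding trace_def scaleR_matrix_nth by (simp add: sum_distrib_left)

lemma adj_matrix_mult: "adj (A ** B) = adj B ** adj (A :: complex^'n^'n)"
  by (simp add: vec_eq_iff adj_def matrix_matrix_mult_def mult.commute)

lemma sum_cnj_mult_adj:
  fixes K :: "complex^'n^'n"
  shows "(\<Sum>a\<in>UNIV. cnj (v $ a) * (adj K *v w) $ a) = (\<Sum>b\<in>UNIV. cnj ((K *v v) $ b) * w $ b)"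
proof -
  have "(\<Sum>a\<in>UNIV. cnj (v $ a) * (adj K *v w) $ a) =
      (\<Sum>a\<in>UNIV. \<Sum>b\<in>UNIV. cnj (v $ a) * cnj (K $ b $ a) * w $ b)"
    by (simp add: matrix_vector_mult_def adj_def sum_distrib_left mult.assoc)
  also have "\<dots> = (\<Sum>b\<in>UNIV. \<Sum>a\<in>UNIV. cnj (v $ a) * cnj (K $ b $ a) * w $ b)"
    by (rule sum.swap)
  also have "\<dots> = (\<Sum>b\<in>UNIV. cnj ((K *v v) $ b) * w $ b)"
    by (simp add: matrix_vector_mult_def sum_distrib_right sum_distrib_left mult_ac)
  finally show ?thesis .
qed

lemma Ad_nth: "Ad K X $ i $ j = (\<Sum>a\<in>UNIV. \<Sum>b\<in>UNIV. cnj (K $ a $ i) * X $ a $ b * K $ b $ j)"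
  by (simp add: Ad_def matrix_matrix_mult_def adj_def sum_distrib_left sum_distrib_right mult_ac)
    (rule sum.swap)

definition Bsign :: "3 \<Rightarrow> complex" where
  "Bsign i = (if i = 1 then -1 else 1)"

definition Bperm :: "3 \<Rightarrow> 3" where
  "Bperm i = (if i = 0 then 0 else if i = 1 then 2 else 1)"

lemma Bmat_nth: "Bmat $ i $ k = (if k = Bperm i then Bsign i else 0)"
  using num3_cases[of i] num3_cases[of k] by (auto simp: Bmat_def Bsign_def Bperm_def)

lemma Bmat_matrix_mult_nth: "(Bmat ** Y) $ i $ j = Bsign i * Y $ Bperm i $ j"
proof -
  have "(Bmat ** Y) $ i $ j = (\<Sum>k\<in>UNIV. if k = Bperm i then Bsign i * Y $ k $ j else 0)"
    unfolding matrix_matrix_mult_def vec_lambda_beta by (rule sum.cong) (auto simp: Bmat_nth)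
  then show ?thesis by simp
qed

lemma matrix_mult_adj_Bmat_nth: "(Y ** adj Bmat) $ i $ j = Bsign j * Y $ i $ Bperm j"
proof -
  have "(Y ** adj Bmat) $ i $ j = (\<Sum>k\<in>UNIV. if k = Bperm j then Y $ i $ k * cnj (Bsign j) else 0)"
    unfolding matrix_matrix_mult_def vec_lambda_beta by (rule sum.cong) (auto simp: adj_def Bmat_nth)
  then show ?thesis by (simp add: Bsign_def)
qed

definition twist :: "M3 \<Rightarrow> M3" where
  "twist X = Bmat ** transpose X ** adj Bmat"

definition trI :: "M3 \<Rightarrow> M3" where
  "trI X = mat (trace X)"

lemma twist_nth: "twist X $ i $ j = Bsign i * Bsign j * X $ Bperm j $ Bperm i"
  by (simp add: twist_def matrix_mult_adj_Bmat_nth Bmat_matrix_mult_nth transpose_def)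

lemma trI_nth: "trI X $ i $ j = (if i = j then X $ 0 $ 0 + X $ 1 $ 1 + X $ 2 $ 2 else 0)"
  by (simp add: trI_def mat_def trace_def sum_UNIV_3)

lemma twist_add: "twist (X + Y) = twist X + twist Y"
  by (simp add: vec_eq_iff twist_nth algebra_simps)

lemma twist_scaleR: "twist (r *\<^sub>R X) = r *\<^sub>R twist X"
  by (simp add: vec_eq_iff twist_nth scaleR_matrix_nth algebra_simps)

lemma trI_add: "trI (X + Y) = trI X + trI Y"
  by (simp add: vec_eq_iff trI_nth algebra_simps)

lemma trI_scaleR: "trI (r *\<^sub>R X) = r *\<^sub>R trI X"
  by (simp add: vec_eq_iff trI_nth scaleR_matrix_nth algebra_simps)

lemma twist_twist_twist_twist: "twist (twist (twist (twist X))) = X"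
  by (rule mat3_eqI) (auto simp: twist_nth Bsign_def Bperm_def)

lemma trI_twist: "trI (twist X) = trI X"
  by (simp add: vec_eq_iff trI_nth twist_nth Bsign_def Bperm_def)

lemma twist_trI: "twist (trI X) = trI X"
  by (rule mat3_eqI) (auto simp: twist_nth trI_nth Bsign_def Bperm_def)

lemma trI_trI: "trI (trI X) = 3 *\<^sub>R trI X"
  by (simp add: vec_eq_iff trI_nth scaleR_conv_of_real)

lemma twist_mat_1: "twist (mat 1) = mat 1"
  by (rule mat3_eqI) (auto simp: twist_nth Bsign_def Bperm_def mat_def)

lemma trI_mat_1: "trI (mat 1) = 3 *\<^sub>R mat 1"
  by (simp add: vec_eq_iff trI_nth scaleR_matrix_nth mat_def scaleR_conv_of_real)

lemma trace_twist: "trace (twist X) = trace X"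
  by (simp add: trace_def sum_UNIV_3 twist_nth Bsign_def Bperm_def)

lemma trace_trI: "trace (trI X) = 3 * trace X"
  by (simp add: trace_def sum_UNIV_3 trI_nth)

lemma Lgen_twist_trI: "Lgen X = (1/2) *\<^sub>R trI X - (1/2) *\<^sub>R twist X - X"
  by (rule mat3_eqI)
    (auto simp: Lgen_def twist_nth trI_nth Bmat_matrix_mult_nth matrix_mult_adj_Bmat_nth
      Bsign_def Bperm_def transpose_def mat_def trace_def sum_UNIV_3 scaleR_matrix_nth algebra_simps)

section \<open>The algebra generated by the twist and the trace map\<close>

definition tcomb :: "real \<Rightarrow> real \<Rightarrow> real \<Rightarrow> real \<Rightarrow> real \<Rightarrow> M3 \<Rightarrow> M3" where
  "tcomb a b c d p X = a *\<^sub>R X + b *\<^sub>R twist X + c *\<^sub>R twist (twist X)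
     + d *\<^sub>R twist (twist (twist X)) + p *\<^sub>R trI X"

lemma tcomb_cong:
  "a = a' \<Longrightarrow> b = b' \<Longrightarrow> c = c' \<Longrightarrow> d = d' \<Longrightarrow> p = p' \<Longrightarrow>
    tcomb a b c d p X = tcomb a' b' c' d' p' X"
  by simp

lemma twist_tcomb: "twist (tcomb a b c d p X) = tcomb d a b c p X"
  by (simp add: tcomb_def twist_add twist_scaleR twist_twist_twist_twist twist_trI algebra_simps)

lemma trI_tcomb: "trI (tcomb a b c d p X) = (a + b + c + d + 3 * p) *\<^sub>R trI X"
  by (simp add: tcomb_def trI_add trI_scaleR trI_twist trI_trI algebra_simps)

lemma tcomb_add_coeffs:
  "tcomb a b c d p X + tcomb a' b' c' d' p' X = tcomb (a + a') (b + b') (c + c') (d + d') (p + p') X"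
  by (simp add: tcomb_def algebra_simps)

lemma scaleR_tcomb: "r *\<^sub>R tcomb a b c d p X = tcomb (r * a) (r * b) (r * c) (r * d) (r * p) X"
  by (simp add: tcomb_def algebra_simps)

lemma tcomb_tcomb:
  "tcomb a b c d p (tcomb a' b' c' d' p' X) =
    tcomb (a*a' + b*d' + c*c' + d*b') (a*b' + b*a' + c*d' + d*c') (a*c' + b*b' + c*a' + d*d')
      (a*d' + b*c' + c*b' + d*a') (p * (a' + b' + c' + d' + 3*p') + p' * (a + b + c + d)) X"
proof -
  have "tcomb a b c d p (tcomb a' b' c' d' p' X) =
      a *\<^sub>R tcomb a' b' c' d' p' X + b *\<^sub>R tcomb d' a' b' c' p' X + c *\<^sub>R tcomb c' d' a' b' p' X
      + d *\<^sub>R tcomb b' c' d' a' p' X + tcomb 0 0 0 0 (p * (a' + b' + c' + d' + 3*p')) X"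
    by (simp add: tcomb_def[of a b c d p] twist_tcomb trI_tcomb) (simp add: tcomb_def)
  then show ?thesis
    by (simp add: scaleR_tcomb tcomb_add_coeffs) (rule tcomb_cong, simp_all add: algebra_simps)
qed

lemma Lgen_tcomb:
  "Lgen (tcomb a b c d p X) =
    tcomb (- a - d/2) (- b - a/2) (- c - b/2) (- d - c/2) ((a + b + c + d)/2) X"
proof -
  have "Lgen (tcomb a b c d p X) = (1/2) *\<^sub>R ((a + b + c + d + 3 * p) *\<^sub>R trI X)
      + (- 1/2) *\<^sub>R tcomb d a b c p X + (- 1) *\<^sub>R tcomb a b c d p X"
    by (simp add: Lgen_twist_trI twist_tcomb trI_tcomb)
  also have "(1/2) *\<^sub>R ((a + b + c + d + 3 * p) *\<^sub>R trI X) = tcomb 0 0 0 0 ((a + b + c + d + 3 * p)/2) X"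
    by (simp add: tcomb_def)
  finally show ?thesis
    by (simp add: scaleR_tcomb tcomb_add_coeffs) (rule tcomb_cong, simp_all add: field_simps)
qed

lemma tcomb_mat_1: "tcomb a b c d p (mat 1) = (a + b + c + d + 3 * p) *\<^sub>R mat 1"
  by (simp add: tcomb_def twist_mat_1 trI_mat_1 algebra_simps)

lemma trace_tcomb: "trace (tcomb a b c d p X) = of_real (a + b + c + d + 3 * p) * trace X"
  by (simp add: tcomb_def trace_add trace_scaleR trace_twist trace_trI algebra_simps)

lemma linear_map_tcomb: "linear_map (tcomb a b c d p)"
  unfolding linear_map_def
  by (auto simp: tcomb_def twist_add trI_add algebra_simps vec_eq_iff twist_nth trI_nth
      scaleR_matrix_nth)

definition mu :: complex where
  "mu = Complex (-1) (-1/2)"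

(* Lfun x0 x1 x2 w is g(L) for every g with g 0 = x0, g (-3/2) = x1, g (-1/2) = x2 and
   g mu = w: these are the eigenvalues of L on the tcomb algebra, the fifth one being cnj mu. *)
definition Lfun :: "real \<Rightarrow> real \<Rightarrow> real \<Rightarrow> complex \<Rightarrow> M3 \<Rightarrow> M3" where
  "Lfun x0 x1 x2 w = tcomb ((x1 + x2)/4 + Re w/2) ((x1 - x2)/4 + Im w/2)
     ((x1 + x2)/4 - Re w/2) ((x1 - x2)/4 - Im w/2) ((x0 - x1)/3)"

lemma Lfun_1: "Lfun 1 1 1 1 X = X"
  by (simp add: Lfun_def tcomb_def)

lemma Lfun_Lfun: "Lfun x0 x1 x2 w (Lfun y0 y1 y2 v X) = Lfun (x0 * y0) (x1 * y1) (x2 * y2) (w * v) X"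
  unfolding Lfun_def tcomb_tcomb by (rule tcomb_cong) (simp_all add: field_simps)

lemma Lgen_Lfun: "Lgen (Lfun x0 x1 x2 w X) = Lfun 0 (- 3/2 * x1) (- 1/2 * x2) (mu * w) X"
  unfolding Lfun_def Lgen_tcomb by (rule tcomb_cong) (simp_all add: mu_def field_simps)

lemma scaleR_Lfun: "r *\<^sub>R Lfun x0 x1 x2 w X = Lfun (r * x0) (r * x1) (r * x2) (r *\<^sub>R w) X"
  unfolding Lfun_def scaleR_tcomb by (rule tcomb_cong) (simp_all add: field_simps)

lemma sums_Lfun:
  assumes "x0 sums y0" "x1 sums y1" "x2 sums y2" "w sums v"
  shows "(\<lambda>n. Lfun (x0 n) (x1 n) (x2 n) (w n) X) sums Lfun y0 y1 y2 v X"
  unfolding Lfun_def tcomb_def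
  by (intro sums_add sums_diff sums_scaleR_left sums_divide sums_Re sums_Im assms)

lemma Lfun_mat_1: "Lfun x0 x1 x2 w (mat 1) = x0 *\<^sub>R mat 1"
  by (simp add: Lfun_def tcomb_mat_1 field_simps)

lemma trace_Lfun: "trace (Lfun x0 x1 x2 w X) = of_real x0 * trace X"
  by (simp add: Lfun_def trace_tcomb field_simps)

lemma Lgen_power: "(Lgen ^^ n) X = Lfun (0 ^ n) ((- 3/2) ^ n) ((- 1/2) ^ n) (mu ^ n) X"
proof (induction n)
  case 0
  show ?case by (simp add: Lfun_1)
next
  case (Suc n)
  then show ?case by (simp add: Lgen_Lfun mult_ac)
qed

lemma sums_exp_scaleR:
  fixes z :: "'a::{real_normed_field,banach}"
  shows "(\<lambda>n. (t ^ n / fact n) *\<^sub>R z ^ n) sums exp (t *\<^sub>R z)"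
proof -
  have "(\<lambda>n. (t *\<^sub>R z) ^ n /\<^sub>R fact n) sums exp (t *\<^sub>R z)"
    by (rule exp_converges)
  then show ?thesis
    by (simp add: divide_inverse_commute)
qed

lemma sup_exp_Lgen: "sup_exp t Lgen = Lfun 1 (exp (- 3/2 * t)) (exp (- 1/2 * t)) (exp (t *\<^sub>R mu))"
proof
  fix X
  have "(\<lambda>n. (t ^ n / fact n) *\<^sub>R (Lgen ^^ n) X) sums
      Lfun (exp (t *\<^sub>R 0)) (exp (t *\<^sub>R (- 3/2))) (exp (t *\<^sub>R (- 1/2))) (exp (t *\<^sub>R mu)) X"
    unfolding Lgen_power scaleR_Lfun
    by (rule sums_Lfun) (simp_all only: sums_exp_scaleR flip: real_scaleR_def)
  then show "sup_exp t Lgen X = Lfun 1 (exp (- 3/2 * t)) (exp (- 1/2 * t)) (exp (t *\<^sub>R mu)) X"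
    unfolding sup_exp_def by (simp add: sums_iff mult.commute)
qed

lemma Re_exp_mu: "Re (exp (t *\<^sub>R mu)) = exp (- t) * cos (t/2)"
  by (simp add: mu_def Re_exp scaleR_complex.code)

lemma Im_exp_mu: "Im (exp (t *\<^sub>R mu)) = - exp (- t) * sin (t/2)"
  by (simp add: mu_def Im_exp scaleR_complex.code)

lemma sup_exp_Lgen_tcomb:
  "sup_exp t Lgen = tcomb
     (exp (- t) * (cosh (t/2) + cos (t/2)) / 2) (- exp (- t) * (sinh (t/2) + sin (t/2)) / 2)
     (exp (- t) * (cosh (t/2) - cos (t/2)) / 2) (- exp (- t) * (sinh (t/2) - sin (t/2)) / 2)
     ((1 - exp (- 3/2 * t)) / 3)"
proof -
  have "exp (- 3/2 * t) = exp (- t) * exp (- (t/2))" "exp (- 1/2 * t) = exp (- t) * exp (t/2)"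
    by (simp_all flip: exp_add)
  then show ?thesis
    unfolding sup_exp_Lgen Lfun_def Re_exp_mu Im_exp_mu cosh_def sinh_def
    by (intro ext tcomb_cong) (simp_all add: field_simps)
qed

lemma sup_exp_Lgen_0: "sup_exp 0 Lgen = id"
  by (simp add: fun_eq_iff sup_exp_Lgen Lfun_1)

lemma sup_exp_Lgen_add: "sup_exp s Lgen \<circ> sup_exp t Lgen = sup_exp (s + t) Lgen"
proof -
  have e: "- 3/2 * s + - 3/2 * t = - 3/2 * (s + t)" "- 1/2 * s + - 1/2 * t = - 1/2 * (s + t)"
    "s *\<^sub>R mu + t *\<^sub>R mu = (s + t) *\<^sub>R mu"
    by (simp_all add: algebra_simps)
  show ?thesis
    unfolding sup_exp_Lgen comp_def Lfun_Lfun mult_exp_exp e by simp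
qed

lemma continuous_on_sup_exp_Lgen: "continuous_on S (\<lambda>t. sup_exp t Lgen X)"
  unfolding sup_exp_Lgen_tcomb tcomb_def by (intro continuous_intros) auto

section \<open>Complete positivity\<close>

definition block_form :: "nat \<Rightarrow> (nat \<Rightarrow> nat \<Rightarrow> M3) \<Rightarrow> (nat \<Rightarrow> complex^3) \<Rightarrow> complex" where
  "block_form k Y v = (\<Sum>i<k. \<Sum>j<k. \<Sum>a\<in>UNIV. cnj (v i $ a) * (Y i j *v v j) $ a)"

lemma psd_block_iff:
  "psd_block k Y \<longleftrightarrow> (\<forall>v. Im (block_form k Y v) = 0 \<and> 0 \<le> Re (block_form k Y v))"
  by (simp add: psd_block_def block_form_def Let_def)

lemma block_form_add: "block_form k (\<lambda>i j. Y i j + Z i j) v = block_form k Y v + block_form k Z v"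
  by (simp add: block_form_def matrix_vector_mult_add_rdistrib distrib_left sum.distrib)

lemma block_form_scaleR: "block_form k (\<lambda>i j. r *\<^sub>R Y i j) v = of_real r * block_form k Y v"
proof -
  have "((r *\<^sub>R Y i j) *v w) $ a = of_real r * (Y i j *v w) $ a" for i j w a
    unfolding matrix_vector_mult_def vec_lambda_beta scaleR_matrix_nth
    by (simp add: sum_distrib_left mult.assoc)
  then show ?thesis
    by (simp add: block_form_def sum_distrib_left mult_ac)
qed

lemma block_form_Ad: "block_form k (\<lambda>i j. Ad K (Y i j)) v = block_form k Y (\<lambda>i. K *v v i)"
proof -
  have "Ad K (Y i j) *v w = adj K *v (Y i j *v (K *v w))" for i j w
    unfolding Ad_def by (metis matrix_vector_mul_assoc)
  then show ?thesis
    by (simp add: block_form_def sum_cnj_mult_adj)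
qed

lemma completely_positive_id: "completely_positive (\<lambda>X. X)"
  unfolding completely_positive_def by simp

lemma completely_positive_Ad: "completely_positive (Ad K)"
  unfolding completely_positive_def psd_block_iff block_form_Ad by blast

lemma completely_positive_add:
  "completely_positive f \<Longrightarrow> completely_positive g \<Longrightarrow> completely_positive (\<lambda>X. f X + g X)"
  unfolding completely_positive_def psd_block_iff block_form_add by simp

lemma completely_positive_scaleR:
  "0 \<le> r \<Longrightarrow> completely_positive f \<Longrightarrow> completely_positive (\<lambda>X. r *\<^sub>R f X)"
  unfolding completely_positive_def psd_block_iff block_form_scaleR by simp

lemma completely_positive_sum:
  "finite I \<Longrightarrow> (\<And>i. i \<in> I \<Longrightarrow> completely_positive (f i)) \<Longrightarrow>
    completely_positive (\<lambda>X. \<Sum>i\<in>I. f i X)"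
proof (induction I rule: finite_induct)
  case empty
  have "completely_positive (\<lambda>X. 0 *\<^sub>R X)"
    by (intro completely_positive_scaleR completely_positive_id) simp
  then show ?case by simp
next
  case (insert x F)
  then show ?case by (simp add: completely_positive_add)
qed

definition munit :: "3 \<Rightarrow> 3 \<Rightarrow> M3" where
  "munit a b = (\<chi> i j. if i = a \<and> j = b then 1 else 0)"

lemma twist2_Kraus: "twist (twist X) = Ad (munit 0 0 - munit 1 1 - munit 2 2) X"
  by (rule mat3_eqI) (auto simp: twist_nth Ad_nth sum_UNIV_3 munit_def Bsign_def Bperm_def)

lemma trI_minus_twist_Kraus:
  "trI X - twist X = Ad (munit 0 2 - munit 1 0) X + Ad (munit 0 1 + munit 2 0) X
     + Ad (munit 1 1 + munit 2 2) X"
  by (rule mat3_eqI) (auto simp: twist_nth trI_nth Ad_nth sum_UNIV_3 munit_def Bsign_def Bperm_def)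

lemma trI_minus_twist3_Kraus:
  "trI X - twist (twist (twist X)) = Ad (munit 0 2 + munit 1 0) X + Ad (munit 0 1 - munit 2 0) X
     + Ad (munit 1 1 + munit 2 2) X"
  by (rule mat3_eqI) (auto simp: twist_nth trI_nth Ad_nth sum_UNIV_3 munit_def Bsign_def Bperm_def)

lemma trI_Kraus: "trI X = (\<Sum>a\<in>UNIV. \<Sum>b\<in>UNIV. Ad (munit a b) X)"
  by (rule mat3_eqI) (auto simp: trI_nth Ad_nth sum_UNIV_3 munit_def)

lemma completely_positive_tcomb:
  assumes "0 \<le> a" "b \<le> 0" "0 \<le> c" "d \<le> 0" "0 \<le> p + b + d"
  shows "completely_positive (tcomb a b c d p)"
proof -
  have "completely_positive (\<lambda>X. a *\<^sub>R X + c *\<^sub>R twist (twist X) + (- b) *\<^sub>R (trI X - twist X)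
      + (- d) *\<^sub>R (trI X - twist (twist (twist X))) + (p + b + d) *\<^sub>R trI X)"
    unfolding trI_minus_twist_Kraus trI_minus_twist3_Kraus
    unfolding twist2_Kraus trI_Kraus
    by (intro completely_positive_add completely_positive_scaleR completely_positive_id
        completely_positive_Ad completely_positive_sum assms) (use assms in simp_all)
  moreover have "tcomb a b c d p = (\<lambda>X. a *\<^sub>R X + c *\<^sub>R twist (twist X) + (- b) *\<^sub>R (trI X - twist X)
      + (- d) *\<^sub>R (trI X - twist (twist (twist X))) + (p + b + d) *\<^sub>R trI X)"
    by (simp add: fun_eq_iff tcomb_def algebra_simps)
  ultimately show ?thesis by simp
qed

lemma sinh_ge_self:
  fixes x :: real
  assumes "0 \<le> x"
  shows "x \<le> sinh x"
proof -
  have "sinh 0 - 0 \<le> sinh x - x"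
  proof (rule DERIV_nonneg_imp_nondecreasing[OF assms])
    fix y :: real
    show "\<exists>d. ((\<lambda>y. sinh y - y) has_real_derivative d) (at y) \<and> 0 \<le> d"
      using cosh_real_ge_1[of y] by (auto intro!: derivative_eq_intros)
  qed
  then show ?thesis by simp
qed

lemma completely_positive_sup_exp_Lgen:
  assumes "0 \<le> t"
  shows "completely_positive (sup_exp t Lgen)"
  unfolding sup_exp_Lgen_tcomb
proof (rule completely_positive_tcomb)
  have sin: "\<bar>sin (t/2)\<bar> \<le> sinh (t/2)"
    using abs_sin_x_le_abs_x[of "t/2"] sinh_ge_self[of "t/2"] assms by simp
  have cos: "\<bar>cos (t/2)\<bar> \<le> cosh (t/2)"
    using abs_cos_le_one[of "t/2"] cosh_real_ge_1[of "t/2"] by linarith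
  show "0 \<le> exp (- t) * (cosh (t/2) + cos (t/2)) / 2" "0 \<le> exp (- t) * (cosh (t/2) - cos (t/2)) / 2"
    using cos by simp_all
  show "- exp (- t) * (sinh (t/2) + sin (t/2)) / 2 \<le> 0" "- exp (- t) * (sinh (t/2) - sin (t/2)) / 2 \<le> 0"
    using sin by simp_all
  define u where "u = exp (- (t/2))"
  have "0 < u" by (simp add: u_def)
  have u: "exp (- t) = u^2" "exp (- 3/2 * t) = u^3" "sinh (t/2) = (1/u - u)/2"
    by (simp_all add: u_def sinh_def exp_minus power2_eq_square power3_eq_cube field_simps
        flip: exp_add)
  have "(1 - exp (- 3/2 * t)) / 3 + - exp (- t) * (sinh (t/2) + sin (t/2)) / 2
      + - exp (- t) * (sinh (t/2) - sin (t/2)) / 2 = (u - 1)^2 * (u + 2) / 6"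
    unfolding u using \<open>0 < u\<close> by (simp add: power2_eq_square power3_eq_cube field_simps)
  moreover have "0 \<le> (u - 1)^2 * (u + 2) / 6"
    using \<open>0 < u\<close> by simp
  ultimately show "0 \<le> (1 - exp (- 3/2 * t)) / 3 + - exp (- t) * (sinh (t/2) + sin (t/2)) / 2
      + - exp (- t) * (sinh (t/2) - sin (t/2)) / 2"
    by linarith
qed

lemma unital_channel_sup_exp_Lgen:
  assumes "0 \<le> t"
  shows "unital_channel (sup_exp t Lgen)"
  unfolding unital_channel_def
proof (intro conjI allI)
  show "linear_map (sup_exp t Lgen)"
    unfolding sup_exp_Lgen Lfun_def by (rule linear_map_tcomb)
  show "completely_positive (sup_exp t Lgen)"
    using assms by (rule completely_positive_sup_exp_Lgen)
  show "sup_exp t Lgen (mat 1) = mat 1"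
    unfolding sup_exp_Lgen Lfun_mat_1 by simp
  show "trace (sup_exp t Lgen X) = trace X" for X
    unfolding sup_exp_Lgen trace_Lfun by simp
qed

lemma qds_unital_sup_exp_Lgen: "qds_unital (\<lambda>t. sup_exp t Lgen)"
  unfolding qds_unital_def
  by (simp add: unital_channel_sup_exp_Lgen sup_exp_Lgen_0 sup_exp_Lgen_add
      continuous_on_sup_exp_Lgen)

lemma power2_norm_vec: "(norm x)^2 = (\<Sum>i\<in>UNIV. (norm (x $ i))^2)"
  by (simp add: norm_vec_def L2_set_def sum_nonneg)

lemma power2_norm_matrix: "(norm A)^2 = (\<Sum>i\<in>UNIV. \<Sum>j\<in>UNIV. (norm (A $ i $ j))^2)"
  by (simp add: power2_norm_vec)

lemma norm_transpose: "norm (transpose A) = norm A"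
proof -
  have "(norm (transpose A))^2 = (norm A)^2"
    unfolding power2_norm_matrix transpose_def vec_lambda_beta by (rule sum.swap)
  then show ?thesis by simp
qed

lemma norm_matrix_vector_mult_le:
  fixes A :: "'a::real_normed_field^'n^'m"
  shows "norm (A *v x) \<le> norm A * norm x"
proof -
  have row: "norm ((A *v x) $ i) \<le> norm (A $ i) * norm x" for i
  proof -
    have "norm ((A *v x) $ i) \<le> (\<Sum>j\<in>UNIV. \<bar>norm (A $ i $ j)\<bar> * \<bar>norm (x $ j)\<bar>)"
      unfolding matrix_vector_mult_def vec_lambda_beta
      by (rule order_trans[OF norm_sum]) (simp add: norm_mult)
    also have "\<dots> \<le> norm (A $ i) * norm x"
      unfolding norm_vec_def by (rule L2_set_mult_ineq)
    finally show ?thesis .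
  qed
  have "norm (A *v x) \<le> L2_set (\<lambda>i. norm (A $ i) * norm x) UNIV"
    unfolding norm_vec_def[of "A *v x"] by (rule L2_set_mono) (simp_all add: row)
  also have "\<dots> = norm A * norm x"
    by (simp add: L2_set_left_distrib norm_vec_def[of A])
  finally show ?thesis .
qed

lemma of_real_power2_norm_cvec: "of_real ((norm v)^2) = (\<Sum>a\<in>UNIV. cnj (v $ a) * v $ a)"
  for v :: "complex^'n"
  unfolding power2_norm_vec of_real_sum complex_norm_square by (simp add: mult.commute)

lemma norm_unitary_mult:
  assumes "adj U ** U = mat 1"
  shows "norm (U *v w) = norm w"
proof -
  have "of_real ((norm (U *v w))^2) = (\<Sum>a\<in>UNIV. cnj (w $ a) * (adj U *v (U *v w)) $ a)"
    unfolding of_real_power2_norm_cvec sum_cnj_mult_adj ..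
  also have "\<dots> = of_real ((norm w)^2)"
    unfolding of_real_power2_norm_cvec by (simp add: matrix_vector_mul_assoc assms)
  finally have "(norm (U *v w))^2 = (norm w)^2"
    by (simp only: of_real_eq_iff)
  then show ?thesis
    by (simp add: power_eq_iff_eq_base)
qed

lemma power2_norm_unitary:
  fixes U :: "complex^'n^'n"
  assumes "adj U ** U = mat 1"
  shows "(norm U)^2 = CARD('n)"
proof -
  have "of_real ((norm U)^2) = (\<Sum>i\<in>UNIV. \<Sum>j\<in>UNIV. cnj (U $ i $ j) * U $ i $ j)"
    unfolding power2_norm_matrix of_real_sum complex_norm_square by (simp add: mult.commute)
  also have "\<dots> = (\<Sum>j\<in>UNIV. \<Sum>i\<in>UNIV. cnj (U $ i $ j) * U $ i $ j)"
    by (rule sum.swap)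
  also have "\<dots> = (\<Sum>j\<in>UNIV. (adj U ** U) $ j $ j)"
    by (simp add: matrix_matrix_mult_def adj_def)
  also have "\<dots> = of_real (of_nat CARD('n))"
    by (simp add: assms mat_def)
  finally show ?thesis
    by (simp only: of_real_eq_iff)
qed

definition axial :: "'a::comm_ring_1^3^3 \<Rightarrow> 'a^3" where
  "axial M = (\<chi> i. if i = 0 then M $ 1 $ 2 - M $ 2 $ 1
     else if i = 1 then M $ 2 $ 0 - M $ 0 $ 2 else M $ 0 $ 1 - M $ 1 $ 0)"

lemma transpose_mult_axial: "transpose M *v axial M = M *v axial M"
proof -
  have "(transpose M *v axial M) $ i = (M *v axial M) $ i" for i :: 3
    using num3_cases[of i]
    by (auto simp: matrix_vector_mult_def sum_UNIV_3 transpose_def axial_def algebra_simps)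
  then show ?thesis by (simp add: vec_eq_iff)
qed

lemma axial_eq_0_imp_symmetric:
  assumes "axial M = 0"
  shows "transpose M = M"
proof -
  have "axial M $ 0 = 0" "axial M $ 1 = 0" "axial M $ 2 = 0"
    using assms by simp_all
  then have "M $ 1 $ 2 = M $ 2 $ 1" "M $ 2 $ 0 = M $ 0 $ 2" "M $ 0 $ 1 = M $ 1 $ 0"
    by (simp_all add: axial_def)
  then show ?thesis
    by (intro mat3_eqI) (auto simp: transpose_def)
qed

(* M acts on the kernel vector axial M of its antisymmetric part as its symmetric part, so
   unitarity forces norm (M + transpose M) >= 2 unless M is symmetric. *)
lemma inner_transpose_unitary3_ge:
  fixes M :: M3
  assumes "adj M ** M = mat 1"
  shows "- 1 \<le> M \<bullet> transpose M"
proof (cases "axial M = 0")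
  case True
  then show ?thesis
    using power2_norm_unitary[OF assms] by (simp add: axial_eq_0_imp_symmetric power2_norm_eq_inner)
next
  case False
  define v where "v = axial M"
  have "(M + transpose M) *v v = 2 *\<^sub>R (M *v v)"
    unfolding matrix_vector_mult_add_rdistrib v_def transpose_mult_axial by (simp add: scaleR_2)
  then have "2 * norm v = norm ((M + transpose M) *v v)"
    using norm_unitary_mult[OF assms, of v] by simp
  also have "\<dots> \<le> norm (M + transpose M) * norm v"
    by (rule norm_matrix_vector_mult_le)
  finally have "2 \<le> norm (M + transpose M)"
    using False by (simp add: v_def)
  then have "2^2 \<le> (norm (M + transpose M))^2"
    by (rule power_mono) simp
  then show ?thesis
    using power2_norm_unitary[OF assms] by (simp add: dot_norm norm_transpose)
qed

section \<open>A functional separating the semigroup from the mixed unitary channels\<close>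

lemma mixed_unitary_nonneg:
  fixes G :: "(M3 \<Rightarrow> M3) \<Rightarrow> real"
  assumes add: "\<And>f g. G (\<lambda>X. f X + g X) = G f + G g"
    and scale: "\<And>r f. G (\<lambda>X. r *\<^sub>R f X) = r * G f"
    and unitary: "\<And>U. unitary_mat U \<Longrightarrow> 0 \<le> G (Ad U)"
    and "mixed_unitary \<Phi>"
  shows "0 \<le> G \<Phi>"
proof -
  obtain n :: nat and lam U where nonneg: "\<forall>j<n. 0 \<le> lam j \<and> unitary_mat (U j)"
    and "\<forall>X. \<Phi> X = (\<Sum>j<n. lam j *\<^sub>R Ad (U j) X)"
    using \<open>mixed_unitary \<Phi>\<close> unfolding mixed_unitary_def by blast
  then have \<Phi>: "\<Phi> = (\<lambda>X. \<Sum>j<n. lam j *\<^sub>R Ad (U j) X)"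
    by (simp add: fun_eq_iff)
  have sum: "G (\<lambda>X. \<Sum>j<m. lam j *\<^sub>R Ad (U j) X) = (\<Sum>j<m. lam j * G (Ad (U j)))" for m
  proof (induction m)
    case 0
    show ?case using scale[of 0 "\<lambda>X. X"] by simp
  next
    case (Suc m)
    then show ?case by (simp add: add scale)
  qed
  have "0 \<le> (\<Sum>j<n. lam j * G (Ad (U j)))"
    using nonneg unitary by (intro sum_nonneg mult_nonneg_nonneg) auto
  then show ?thesis
    unfolding \<Phi> sum .
qed

lemma inner_transpose_eq: "M \<bullet> transpose M = Re (\<Sum>a\<in>UNIV. \<Sum>b\<in>UNIV. cnj (M $ a $ b) * M $ b $ a)"
  for M :: "complex^'n^'n"
  by (simp add: inner_vec_def inner_complex_def transpose_def)

lemma Ad_munit_nth: "Ad U (munit a b) $ c $ d = cnj (U $ a $ c) * U $ b $ d"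
  using num3_cases[of a] num3_cases[of b] by (auto simp: Ad_nth munit_def sum_UNIV_3)

definition witness :: "(M3 \<Rightarrow> M3) \<Rightarrow> real" where
  "witness \<Psi> = Re (trace (\<Psi> (mat 1))) / 6 + Re (\<Sum>a\<in>UNIV. \<Sum>b\<in>UNIV. \<Sum>c\<in>UNIV. \<Sum>d\<in>UNIV.
     Bmat $ c $ b * Bmat $ d $ a * \<Psi> (munit a b) $ c $ d) / 2"

lemma witness_add: "witness (\<lambda>X. f X + g X) = witness f + witness g"
  by (simp add: witness_def trace_add sum.distrib distrib_left add_divide_distrib)

lemma witness_scaleR: "witness (\<lambda>X. r *\<^sub>R f X) = r * witness f"
  by (simp add: witness_def trace_scaleR scaleR_matrix_nth sum_distrib_left mult_ac distrib_left)

lemma witness_Ad: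
  assumes "adj U ** U = mat 1"
  shows "witness (Ad U) = 1/2 + (U ** Bmat) \<bullet> transpose (U ** Bmat) / 2"
proof -
  have "Ad U (mat 1) = mat 1"
    using assms by (simp add: Ad_def)
  moreover have "(\<Sum>a\<in>UNIV. \<Sum>b\<in>UNIV. \<Sum>c\<in>UNIV. \<Sum>d\<in>UNIV. Bmat $ c $ b * Bmat $ d $ a * Ad U (munit a b) $ c $ d)
      = (\<Sum>a\<in>UNIV. \<Sum>b\<in>UNIV. cnj ((U ** Bmat) $ a $ b) * (U ** Bmat) $ b $ a)"
    unfolding Ad_munit_nth by (simp add: sum_UNIV_3 Bmat_def matrix_matrix_mult_def)
  ultimately show ?thesis
    by (simp add: witness_def inner_transpose_eq trace_def sum_UNIV_3 mat_def)
qed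

lemma unitary_mult_Bmat: "adj U ** U = mat 1 \<Longrightarrow> adj (U ** Bmat) ** (U ** Bmat) = mat 1"
proof -
  assume "adj U ** U = mat 1"
  moreover have "adj Bmat ** Bmat = mat 1"
    by (rule mat3_eqI) (auto simp: matrix_matrix_mult_def adj_def sum_UNIV_3 Bmat_def mat_def)
  ultimately show ?thesis
    by (simp add: adj_matrix_mult matrix_mul_assoc flip: matrix_mul_assoc[of "adj Bmat"])
qed

lemma witness_Ad_nonneg:
  assumes "unitary_mat U"
  shows "0 \<le> witness (Ad U)"
proof -
  have U: "adj U ** U = mat 1"
    using assms by (simp add: unitary_mat_def)
  have "- 1 \<le> (U ** Bmat) \<bullet> transpose (U ** Bmat)"
    by (rule inner_transpose_unitary3_ge[OF unitary_mult_Bmat[OF U]])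
  then show ?thesis
    by (simp add: witness_Ad[OF U])
qed

lemma witness_tcomb: "witness (tcomb a b c d p) = 5 * b + d + 3 * p"
proof -
  have "witness (\<lambda>X. X) = 0" "witness twist = 5" "witness (\<lambda>X. twist (twist X)) = 0"
    "witness (\<lambda>X. twist (twist (twist X))) = 1" "witness trI = 3"
    by (simp_all add: witness_def trace_def sum_UNIV_3 Bmat_def munit_def mat_def twist_nth trI_nth
        Bsign_def Bperm_def)
  moreover have "tcomb a b c d p = (\<lambda>X. a *\<^sub>R X + b *\<^sub>R twist X + c *\<^sub>R twist (twist X)
     + d *\<^sub>R twist (twist (twist X)) + p *\<^sub>R trI X)"
    by (simp add: fun_eq_iff tcomb_def)
  ultimately show ?thesis
    by (simp add: witness_add witness_scaleR)
qed

lemma witness_sup_exp_Lgen: "witness (sup_exp t Lgen) = exp (- t) * ff t"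
proof -
  have "exp (- t) * exp t = 1" "exp (- t) * exp (- t / 2) = exp (- 3/2 * t)"
    by (simp_all flip: exp_add)
  then have "exp (- t) * ff t
      = 1 - exp (- 3/2 * t) - 3 * exp (- t) * sinh (t/2) - 2 * exp (- t) * sin (t/2)"
    unfolding ff_def by (simp add: right_diff_distrib)
  then show ?thesis
    unfolding sup_exp_Lgen_tcomb witness_tcomb by (simp add: field_simps)
qed

lemma not_mixed_unitary_sup_exp_Lgen:
  assumes "ff t < 0"
  shows "\<not> mixed_unitary (sup_exp t Lgen)"
proof
  assume "mixed_unitary (sup_exp t Lgen)"
  with witness_add witness_scaleR witness_Ad_nonneg have "0 \<le> witness (sup_exp t Lgen)"
    by (rule mixed_unitary_nonneg)
  moreover have "witness (sup_exp t Lgen) < 0"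
    using assms by (simp add: witness_sup_exp_Lgen mult_pos_neg)
  ultimately show False
    by simp
qed

section \<open>The first positive zero of ff\<close>

lemma sin_ge_cubic:
  fixes x :: real
  assumes "0 \<le> x"
  shows "x - x^3 / 6 \<le> sin x"
proof -
  define e where "e = \<bar>sin x - x\<bar>"
  have "(\<Sum>m<3. sin_coeff m * x ^ m) = x"
    by (simp add: numeral_3_eq_3 sin_coeff_def)
  moreover have "fact 3 = (6::real)"
    by (simp add: eval_nat_numeral)
  ultimately have "e \<le> inverse 6 * \<bar>x\<bar>^3"
    using Maclaurin_sin_bound[of x 3] unfolding e_def by (simp only:)
  then have "6 * e \<le> x^3"
    using assms by (simp add: field_simps)
  moreover have "x - sin x \<le> e"
    by (simp add: e_def)
  ultimately show ?thesis
    by linarith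
qed

lemma ff_eq: "ff t = (exp (t/2) - 1)^2 * ((exp (t/2) + 1/2) / exp (t/2)) - 2 * sin (t/2)"
proof -
  define y where "y = exp (t/2)"
  have "0 < y" by (simp add: y_def)
  have "exp t = y^2" "exp (- t / 2) = 1 / y" "sinh (t/2) = (y - 1/y) / 2"
    by (simp_all add: y_def sinh_def exp_minus power2_eq_square inverse_eq_divide flip: exp_add)
  then have "ff t = y^2 - 1/y - 3 * ((y - 1/y) / 2) - 2 * sin (t/2)"
    by (simp add: ff_def)
  also have "\<dots> = (y - 1)^2 * ((y + 1/2) / y) - 2 * sin (t/2)"
    using \<open>0 < y\<close> by (simp add: field_simps power2_eq_square)
  finally show ?thesis
    by (simp add: y_def)
qed

lemma ff_neg_near_0:
  assumes "0 < t" "t \<le> 1/2"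
  shows "ff t < 0"
proof -
  define u where "u = t/2"
  define y where "y = exp u"
  have u: "0 < u" "u \<le> 1/4"
    using assms by (simp_all add: u_def)
  have y: "1 \<le> y" "y \<le> 1 + 2 * u"
    using u exp_bound_lemma[of u] by (simp_all add: y_def)
  have "(y - 1)^2 * ((y + 1/2) / y) \<le> (2 * u)^2 * (3/2)"
    using y by (intro mult_mono power_mono) (simp_all add: field_simps)
  also have "\<dots> < 2 * u - u^3 / 3"
  proof -
    have "u * u \<le> u * (1/4)" "u * (u * u) \<le> 1 * (u * u)"
      using u by (intro mult_left_mono mult_right_mono; simp)+
    then show ?thesis
      unfolding power2_eq_square power3_eq_cube using u by linarith
  qed
  also have "\<dots> \<le> 2 * sin u"
    using sin_ge_cubic[of u] u by simp
  finally show ?thesis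
    by (simp add: ff_eq u_def y_def)
qed

lemma ff_2_pos: "0 < ff 2"
proof -
  define y where "y = exp (1::real)"
  have "5/2 \<le> y"
    using exp_lower_Taylor_quadratic[of 1] by (simp add: y_def)
  define d where "d = y - 5/2"
  have "0 \<le> d"
    using \<open>5/2 \<le> y\<close> by (simp add: d_def)
  have "(y - 1)^2 * (y + 1/2) - 2 * y = 7/4 + 37/4 * d + 6 * d^2 + d^3"
    by (simp add: d_def power2_eq_square power3_eq_cube field_simps)
  also have "\<dots> > 0"
    using \<open>0 \<le> d\<close> by (simp add: add_pos_nonneg)
  finally have "2 * y < (y - 1)^2 * (y + 1/2)"
    by simp
  then have "2 < (y - 1)^2 * ((y + 1/2) / y)"
    using \<open>5/2 \<le> y\<close> by (simp add: field_simps)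
  moreover have "ff 2 = (y - 1)^2 * ((y + 1/2) / y) - 2 * sin 1"
    by (simp add: ff_eq y_def)
  ultimately show ?thesis
    using sin_le_one[of 1] by linarith
qed

lemma continuous_on_ff: "continuous_on S ff"
  unfolding ff_def by (intro continuous_intros) auto

lemma first_zero_after_negative:
  fixes f :: "real \<Rightarrow> real"
  assumes cont: "continuous_on {a..b} f" and "0 < a" "a \<le> b"
    and neg: "\<And>t. 0 < t \<Longrightarrow> t \<le> a \<Longrightarrow> f t < 0" and "0 < f b"
  shows "\<exists>t0>0. f t0 = 0 \<and> (\<forall>s. 0 < s \<and> s < t0 \<longrightarrow> f s < 0)"
proof -
  define Z where "Z = {x \<in> {a..b}. f x = 0}"
  have "f a < 0"
    using neg \<open>0 < a\<close> by simp
  then have "Z \<noteq> {}"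
    using IVT'[of f a 0 b] cont \<open>a \<le> b\<close> \<open>0 < f b\<close> by (force simp: Z_def)
  moreover have "bdd_below Z"
    unfolding Z_def by (rule bdd_belowI[of _ a]) auto
  moreover have "closed Z"
    unfolding Z_def by (rule continuous_closed_preimage_constant[OF cont closed_atLeastAtMost])
  ultimately have "Inf Z \<in> Z"
    by (rule closed_contains_Inf)
  then have t0: "a \<le> Inf Z" "Inf Z \<le> b" "f (Inf Z) = 0"
    by (simp_all add: Z_def)
  have below: "f s < 0" if "0 < s" "s < Inf Z" for s
  proof (cases "s \<le> a")
    case True
    then show ?thesis using neg that by simp
  next
    case False
    show ?thesis
    proof (rule ccontr)
      assume "\<not> f s < 0"
      moreover have "continuous_on {a..s} f"
        by (rule continuous_on_subset[OF cont]) (use that t0 in auto)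
      ultimately obtain z where "a \<le> z" "z \<le> s" "f z = 0"
        using IVT'[of f a 0 s] \<open>f a < 0\<close> False by auto
      then have "Inf Z \<le> z"
        using that t0 \<open>bdd_below Z\<close> by (intro cInf_lower) (simp_all add: Z_def)
      then show False
        using \<open>z \<le> s\<close> \<open>s < Inf Z\<close> by simp
    qed
  qed
  moreover have "0 < Inf Z"
    using t0 \<open>0 < a\<close> by linarith
  ultimately show ?thesis
    using t0 by blast
qed

theorem mainTheorem15:
  shows "qds_unital (\<lambda>t. sup_exp t Lgen) \<and>
    (\<exists>t0>0. ff t0 = 0 \<and> (\<forall>s. 0 < s \<and> s < t0 \<longrightarrow> ff s \<noteq> 0) \<and>
       (\<forall>t. 0 < t \<and> t < t0 \<longrightarrow> \<not> mixed_unitary (sup_exp t Lgen)))"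
proof -
  obtain t0 where "0 < t0" "ff t0 = 0" and neg: "\<forall>s. 0 < s \<and> s < t0 \<longrightarrow> ff s < 0"
    using first_zero_after_negative[of "1/2" 2 ff, OF continuous_on_ff _ _ ff_neg_near_0 ff_2_pos]
    by auto
  moreover have "\<forall>t. 0 < t \<and> t < t0 \<longrightarrow> \<not> mixed_unitary (sup_exp t Lgen)"
    using neg not_mixed_unitary_sup_exp_Lgen by blast
  moreover have "\<forall>s. 0 < s \<and> s < t0 \<longrightarrow> ff s \<noteq> 0"
    using neg by force
  ultimately show ?thesis
    using qds_unital_sup_exp_Lgen by blast
qed

end
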